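(* Let $\mathcal{P}$ be a set of inductively defined predicates and let $P \in \mathcal{P}$, with parameters $(\vec{\alpha},\vec{\beta},\vec{\xi})$, be syntactically compositional. Then $P$ is semantically compositional, i.e. for every pair $\vec{\gamma}=(\gamma_1,\gamma_2)$ of a location variable and a data variable, the entailment $$\exists \vec{\beta}.\ P(\vec{\alpha},\vec{\beta},\vec{\xi}) \ast P(\vec{\beta},\vec{\gamma},\vec{\xi}) \Rightarrow P(\vec{\alpha},\vec{\gamma},\vec{\xi})$$ holds, that is, every stack–heap pair $(s,h)$ satisfying the left-hand side also satisfies the right-hand side.
   Context: Separation logic setting: location variables (interpreted in a set $\mathbb{L}$ of locations, with a constant ${\sf nil}$) and data variables (interpreted as data values, multisets of values, etc.); a set $\mathcal{F}$ of pointer fields and $\mathcal{D}$ of data fields. A state is a pair $(s,h)$: a stack $s$ assigning values to variables, and a heap $h$, a finite partial function mapping pairs (location, pointer field) to locations and pairs (location, data field) to data values. Formulas: pure formulas $\Pi$ (conjunctions of (dis)equalities of location variables and constraints $\Delta$ over data variables in some decidable theory), spatial formulas $\Sigma ::= \mathtt{emp} \mid E\mapsto\rho \mid Q(E,\vec{F}) \mid \Sigma\ast\Sigma$, and formulas built as $\Pi\land\Sigma$, disjunction and existential quantification. $\mathtt{emp}$ holds iff the heap is empty; $E\mapsto\{(f_i,x_i)\}_{i\in I}$ holds iff the heap is defined exactly on location $s(E)$ with fields $f_i$ and $h(s(E),f_i)=s(x_i)$; $\Sigma_1\ast\Sigma_2$ holds iff the heap splits into two domain-disjoint parts satisfying $\Sigma_1$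 and $\Sigma_2$ respectively. Each predicate $Q\in\mathcal{P}$ is defined by a finite set of rules $Q(E,\vec{F}) ::= \exists\vec{Z}.\ \Pi\land\Sigma$, with least-fixed-point semantics. A rule is a base rule if $\Sigma$ contains no predicate atoms, otherwise inductive. Every inductive rule $Q(E,\vec F)::=\exists \vec Z.\Pi\land\Sigma_1\ast\Sigma_2$ satisfies: $\Sigma_1$ consists only of points-to atoms, contains a unique points-to atom with source $E$, contains all location variables of $\vec Z$, and its Gaifman graph is a connected DAG in which every vertex is reachable from $E$; $\Sigma_2$ consists only of predicate atoms $Q'(Z,\vec{Z'})$ with $Z$ a vertex of that graph without outgoing arcs. Syntactic compositionality: $P$ has parameters $(\vec\alpha,\vec\beta,\vec\xi)$ with source parameters $\vec\alpha=(\alpha_1,\alpha_2)=(E,C)$, hole parameters $\vec\beta=(\beta_1,\beta_2)=(F,H)$ ($E,F$ location variables, $C,H$ data variables) and static parameters $\vec\xi$. $P$ is syntactically compositional if its definition has exactly one base rule, namely $P(\vec\alpha,\vec\beta,\vec\xi)::=\alpha_1=\beta_1\land\alpha_2=\beta_2\land\mathtt{emp}$, and at least one inductive rule, and every inductive rule has the form $P(\vec\alpha,\vec\beta,\vec\xi)::=\exists\vec Z.\ \Pi\land\Sigma_1\ast\Sigma_2\ast P(\vec\gamma,\vec\beta,\vec\xi)$ where $\Sigma_1$ is a nonempty separating conjunction of points-to atoms, $\Sigma_2$ is a (possibly empty) separating conjunction of predicate atoms (possibly including $P$ atoms), $\vec\gamma$ consists of variables of $\vec Z$, and the variables of $\vec\beta$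 do not occur in $\Pi$, $\Sigma_1$, $\Sigma_2$ or $\vec\gamma$ (and the rule satisfies the general root/connectedness conditions above). *)

theory Defs
  imports "HOL-Library.Multiset"
begin

text \<open>Type parameters: 'x location variables, 'y data variables, 'r relation symbols of the
  (abstract) data theory, 'f pointer fields, 'g data fields, 'p predicate names,
  'l locations, 'd data values.\<close>

datatype 'x lterm = LV 'x | LNil

datatype ('x,'y,'r) pure =
    LEq "'x lterm" "'x lterm"
  | LNeq "'x lterm" "'x lterm"
  | DEq 'y 'y
  | DRel 'r "'y list"

datatype ('x,'y,'f,'g) pto = PTo 'x "('f \<times> 'x) list" "('g \<times> 'y) list"

datatype ('x,'y,'p) patom = PAtom 'p "'x list" "'y list"

text \<open>Symbolic heap  \<exists> Zl Zd. \<Pi> \<and> (points-to atoms) \<ast> (predicate atoms)\<close>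
datatype ('x,'y,'r,'f,'g,'p) sh =
  SH "'x list" "'y list" "('x,'y,'r) pure list" "('x,'y,'f,'g) pto list" "('x,'y,'p) patom list"

record ('x,'y,'r,'f,'g,'p) sys =
  lparams :: "'p \<Rightarrow> 'x list"
  dparams :: "'p \<Rightarrow> 'y list"
  rules :: "'p \<Rightarrow> ('x,'y,'r,'f,'g,'p) sh list"

fun lvars_lterm :: "'x lterm \<Rightarrow> 'x set" where
  "lvars_lterm (LV x) = {x}"
| "lvars_lterm LNil = {}"

fun lvars_pure :: "('x,'y,'r) pure \<Rightarrow> 'x set" where
  "lvars_pure (LEq a b) = lvars_lterm a \<union> lvars_lterm b"
| "lvars_pure (LNeq a b) = lvars_lterm a \<union> lvars_lterm b"
| "lvars_pure (DEq _ _) = {}"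
| "lvars_pure (DRel _ _) = {}"

fun dvars_pure :: "('x,'y,'r) pure \<Rightarrow> 'y set" where
  "dvars_pure (LEq _ _) = {}"
| "dvars_pure (LNeq _ _) = {}"
| "dvars_pure (DEq x y) = {x, y}"
| "dvars_pure (DRel _ ys) = set ys"

fun pto_src :: "('x,'y,'f,'g) pto \<Rightarrow> 'x" where
  "pto_src (PTo E _ _) = E"

fun lvars_pto :: "('x,'y,'f,'g) pto \<Rightarrow> 'x set" where
  "lvars_pto (PTo E pf _) = insert E (snd ` set pf)"

fun dvars_pto :: "('x,'y,'f,'g) pto \<Rightarrow> 'y set" where
  "dvars_pto (PTo _ _ df) = snd ` set df"

fun lvars_patom :: "('x,'y,'p) patom \<Rightarrow> 'x set" where
  "lvars_patom (PAtom _ xs _) = set xs"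

fun dvars_patom :: "('x,'y,'p) patom \<Rightarrow> 'y set" where
  "dvars_patom (PAtom _ _ ys) = set ys"

fun is_base :: "('x,'y,'r,'f,'g,'p) sh \<Rightarrow> bool" where
  "is_base (SH _ _ _ _ pr) = (pr = [])"

type_synonym ('l,'f,'g,'d) heap = "(('l \<times> 'f) \<rightharpoonup> 'l) \<times> (('l \<times> 'g) \<rightharpoonup> 'd)"
type_synonym ('x,'y,'l,'d) stack = "('x \<Rightarrow> 'l) \<times> ('y \<Rightarrow> 'd)"

definition hemp :: "('l,'f,'g,'d) heap" where
  "hemp = (Map.empty, Map.empty)"

definition hdisj :: "('l,'f,'g,'d) heap \<Rightarrow> ('l,'f,'g,'d) heap \<Rightarrow> bool" where
  "hdisj h1 h2 \<longleftrightarrow> dom (fst h1) \<inter> dom (fst h2) = {} \<and> dom (snd h1) \<inter> dom (snd h2) = {}"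

definition hunion :: "('l,'f,'g,'d) heap \<Rightarrow> ('l,'f,'g,'d) heap \<Rightarrow> ('l,'f,'g,'d) heap" where
  "hunion h1 h2 = (fst h1 ++ fst h2, snd h1 ++ snd h2)"

definition heap_finite :: "('l,'f,'g,'d) heap \<Rightarrow> bool" where
  "heap_finite h \<longleftrightarrow> finite (dom (fst h)) \<and> finite (dom (snd h))"

fun lterm_val :: "'l \<Rightarrow> ('x,'y,'l,'d) stack \<Rightarrow> 'x lterm \<Rightarrow> 'l" where
  "lterm_val nil s (LV x) = fst s x"
| "lterm_val nil s LNil = nil"

text \<open>I interprets the relation symbols of the data theory; nil is the constant nil.\<close>
fun pure_sat :: "('r \<Rightarrow> 'd list \<Rightarrow> bool) \<Rightarrow> 'l \<Rightarrow> ('x,'y,'l,'d) stack \<Rightarrow> ('x,'y,'r) pure \<Rightarrow> bool" where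
  "pure_sat I nil s (LEq a b) = (lterm_val nil s a = lterm_val nil s b)"
| "pure_sat I nil s (LNeq a b) = (lterm_val nil s a \<noteq> lterm_val nil s b)"
| "pure_sat I nil s (DEq x y) = (snd s x = snd s y)"
| "pure_sat I nil s (DRel r ys) = I r (map (snd s) ys)"

fun pto_sat :: "('x,'y,'l,'d) stack \<Rightarrow> ('l,'f,'g,'d) heap \<Rightarrow> ('x,'y,'f,'g) pto \<Rightarrow> bool" where
  "pto_sat s h (PTo E pf df) \<longleftrightarrow>
     dom (fst h) = {(fst s E, f) | f. f \<in> fst ` set pf} \<and>
     (\<forall>(f,x) \<in> set pf. fst h (fst s E, f) = Some (fst s x)) \<and>
     dom (snd h) = {(fst s E, g) | g. g \<in> fst ` set df} \<and>
     (\<forall>(g,y) \<in> set df. snd h (fst s E, g) = Some (snd s y))"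

fun sepconj :: "(('l,'f,'g,'d) heap \<Rightarrow> bool) list \<Rightarrow> ('l,'f,'g,'d) heap \<Rightarrow> bool" where
  "sepconj [] h = (h = hemp)"
| "sepconj (A # As) h = (\<exists>h1 h2. hdisj h1 h2 \<and> h = hunion h1 h2 \<and> A h1 \<and> sepconj As h2)"

fun sh_sat :: "('r \<Rightarrow> 'd list \<Rightarrow> bool) \<Rightarrow> 'l \<Rightarrow>
    ('p \<Rightarrow> 'l list \<Rightarrow> 'd list \<Rightarrow> ('l,'f,'g,'d) heap \<Rightarrow> bool) \<Rightarrow>
    ('x,'y,'l,'d) stack \<Rightarrow> ('l,'f,'g,'d) heap \<Rightarrow> ('x,'y,'r,'f,'g,'p) sh \<Rightarrow> bool" where
  "sh_sat I nil PS s h (SH zl zd pu pt pr) \<longleftrightarrow>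
     (\<exists>s'. (\<forall>x. x \<notin> set zl \<longrightarrow> fst s' x = fst s x) \<and>
           (\<forall>y. y \<notin> set zd \<longrightarrow> snd s' y = snd s y) \<and>
           (\<forall>p \<in> set pu. pure_sat I nil s' p) \<and>
           sepconj (map (\<lambda>a h. pto_sat s' h a) pt @
                    map (\<lambda>a h. case a of PAtom Q xs ys \<Rightarrow> PS Q (map (fst s') xs) (map (snd s') ys) h) pr) h)"

definition pred_sem :: "('r \<Rightarrow> 'd list \<Rightarrow> bool) \<Rightarrow> 'l \<Rightarrow> ('x,'y,'r,'f,'g,'p) sys \<Rightarrow>
    ('p \<times> 'l list \<times> 'd list \<times> ('l,'f,'g,'d) heap) set" where
  "pred_sem I nil S = lfp (\<lambda>X. {(Q, ls, ds, h). \<exists>r \<in> set (rules S Q). \<exists>s.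
       map (fst s) (lparams S Q) = ls \<and> map (snd s) (dparams S Q) = ds \<and>
       sh_sat I nil (\<lambda>Q' ls' ds' h'. (Q', ls', ds', h') \<in> X) s h r})"

definition sat :: "('r \<Rightarrow> 'd list \<Rightarrow> bool) \<Rightarrow> 'l \<Rightarrow> ('x,'y,'r,'f,'g,'p) sys \<Rightarrow>
    ('x,'y,'l,'d) stack \<Rightarrow> ('l,'f,'g,'d) heap \<Rightarrow> ('x,'y,'r,'f,'g,'p) sh \<Rightarrow> bool" where
  "sat I nil S s h \<phi> = sh_sat I nil (\<lambda>Q ls ds h. (Q, ls, ds, h) \<in> pred_sem I nil S) s h \<phi>"

definition entails :: "('r \<Rightarrow> 'd list \<Rightarrow> bool) \<Rightarrow> 'l \<Rightarrow> ('x,'y,'r,'f,'g,'p) sys \<Rightarrow>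
    ('x,'y,'r,'f,'g,'p) sh \<Rightarrow> ('x,'y,'r,'f,'g,'p) sh \<Rightarrow> bool" where
  "entails I nil S A B \<longleftrightarrow>
     (\<forall>(s :: ('x,'y,'l,'d) stack) (h :: ('l,'f,'g,'d) heap).
        heap_finite h \<longrightarrow> sat I nil S s h A \<longrightarrow> sat I nil S s h B)"

definition gaif_verts :: "('x,'y,'f,'g) pto list \<Rightarrow> 'x set" where
  "gaif_verts pt = (\<Union>a \<in> set pt. lvars_pto a)"

definition gaif_arcs :: "('x,'y,'f,'g) pto list \<Rightarrow> ('x \<times> 'x) set" where
  "gaif_arcs pt = {(E, x) | E pf df x. PTo E pf df \<in> set pt \<and> x \<in> snd ` set pf}"

definition rooted_rule :: "'x \<Rightarrow> 'x list \<Rightarrow> ('x,'y,'f,'g) pto list \<Rightarrow> ('x,'y,'p) patom list \<Rightarrow> bool" where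
  "rooted_rule E zl pt pr \<longleftrightarrow>
     length (filter (\<lambda>a. pto_src a = E) pt) = 1 \<and>
     set zl \<subseteq> gaif_verts pt \<and>
     acyclic (gaif_arcs pt) \<and>
     (\<forall>v \<in> gaif_verts pt. (E, v) \<in> (gaif_arcs pt)\<^sup>*) \<and>
     (\<forall>a \<in> set pr. case a of PAtom Q xs ys \<Rightarrow>
        xs \<noteq> [] \<and> hd xs \<in> gaif_verts pt \<and> (\<forall>w. (hd xs, w) \<notin> gaif_arcs pt))"

fun wf_rule :: "('x,'y,'r,'f,'g,'p) sys \<Rightarrow> 'p set \<Rightarrow> 'p \<Rightarrow> ('x,'y,'r,'f,'g,'p) sh \<Rightarrow> bool" where
  "wf_rule S Ps Q (SH zl zd pu pt pr) \<longleftrightarrow>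
     set zl \<inter> set (lparams S Q) = {} \<and> set zd \<inter> set (dparams S Q) = {} \<and>
     (\<Union>p \<in> set pu. lvars_pure p) \<union> (\<Union>a \<in> set pt. lvars_pto a) \<union> (\<Union>a \<in> set pr. lvars_patom a)
        \<subseteq> set zl \<union> set (lparams S Q) \<and>
     (\<Union>p \<in> set pu. dvars_pure p) \<union> (\<Union>a \<in> set pt. dvars_pto a) \<union> (\<Union>a \<in> set pr. dvars_patom a)
        \<subseteq> set zd \<union> set (dparams S Q) \<and>
     (\<forall>a \<in> set pr. case a of PAtom Q' xs ys \<Rightarrow>
        Q' \<in> Ps \<and> length xs = length (lparams S Q') \<and> length ys = length (dparams S Q')) \<and>
     (pr \<noteq> [] \<longrightarrow> rooted_rule (hd (lparams S Q)) zl pt pr)"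

definition wf_sys :: "('x,'y,'r,'f,'g,'p) sys \<Rightarrow> 'p set \<Rightarrow> bool" where
  "wf_sys S Ps \<longleftrightarrow> finite Ps \<and>
     (\<forall>Q \<in> Ps. lparams S Q \<noteq> [] \<and> distinct (lparams S Q) \<and> distinct (dparams S Q) \<and>
        (\<forall>r \<in> set (rules S Q). wf_rule S Ps Q r))"

text \<open>Parameters of P are (\<alpha>1 # \<beta>1 # \<xi>l, \<alpha>2 # \<beta>2 # \<xi>d): \<alpha> = (\<alpha>1,\<alpha>2) source, \<beta> = (\<beta>1,\<beta>2) hole,
  \<xi> = (\<xi>l, \<xi>d) static parameters.\<close>
definition syn_compositional :: "('x,'y,'r,'f,'g,'p) sys \<Rightarrow> 'p \<Rightarrow> bool" where
  "syn_compositional S P \<longleftrightarrow>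
    (\<exists>\<alpha>1 \<beta>1 \<xi>l \<alpha>2 \<beta>2 \<xi>d.
       lparams S P = \<alpha>1 # \<beta>1 # \<xi>l \<and> dparams S P = \<alpha>2 # \<beta>2 # \<xi>d \<and>
       (\<exists>pu. filter is_base (rules S P) = [SH [] [] pu [] []] \<and>
             set pu = {LEq (LV \<alpha>1) (LV \<beta>1), DEq \<alpha>2 \<beta>2}) \<and>
       (\<exists>r \<in> set (rules S P). \<not> is_base r) \<and>
       (\<forall>r \<in> set (rules S P). \<not> is_base r \<longrightarrow>
          (\<exists>zl zd pu pt pr \<Sigma>2 \<gamma>1 \<gamma>2.
             r = SH zl zd pu pt pr \<and> pt \<noteq> [] \<and>
             mset pr = mset (PAtom P (\<gamma>1 # \<beta>1 # \<xi>l) (\<gamma>2 # \<beta>2 # \<xi>d) # \<Sigma>2) \<and>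
             \<gamma>1 \<in> set zl \<and> \<gamma>2 \<in> set zd \<and> \<gamma>1 \<noteq> \<beta>1 \<and> \<gamma>2 \<noteq> \<beta>2 \<and>
             \<beta>1 \<notin> (\<Union>p \<in> set pu. lvars_pure p) \<union> (\<Union>a \<in> set pt. lvars_pto a) \<union> (\<Union>a \<in> set \<Sigma>2. lvars_patom a) \<and>
             \<beta>2 \<notin> (\<Union>p \<in> set pu. dvars_pure p) \<union> (\<Union>a \<in> set pt. dvars_pto a) \<union> (\<Union>a \<in> set \<Sigma>2. dvars_patom a))))"

text \<open>Semantic compositionality: for all (\<gamma>1,\<gamma>2) (not captured by the quantifier \<exists>\<beta>),
  \<exists>\<beta>.\<close>
definition sem_compositional :: "('r \<Rightarrow> 'd list \<Rightarrow> bool) \<Rightarrow> 'l \<Rightarrow> ('x,'y,'r,'f,'g,'p) sys \<Rightarrow> 'p \<Rightarrow> bool" where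
  "sem_compositional I nil S P \<longleftrightarrow>
    (\<exists>\<alpha>1 \<beta>1 \<xi>l \<alpha>2 \<beta>2 \<xi>d.
       lparams S P = \<alpha>1 # \<beta>1 # \<xi>l \<and> dparams S P = \<alpha>2 # \<beta>2 # \<xi>d \<and>
       (\<forall>\<gamma>1 \<gamma>2. \<gamma>1 \<noteq> \<beta>1 \<and> \<gamma>2 \<noteq> \<beta>2 \<longrightarrow>
          entails I nil S
            (SH [\<beta>1] [\<beta>2] [] []
               [PAtom P (\<alpha>1 # \<beta>1 # \<xi>l) (\<alpha>2 # \<beta>2 # \<xi>d), PAtom P (\<beta>1 # \<gamma>1 # \<xi>l) (\<beta>2 # \<gamma>2 # \<xi>d)])
            (SH [] [] [] [] [PAtom P (\<alpha>1 # \<gamma>1 # \<xi>l) (\<alpha>2 # \<gamma>2 # \<xi>d)])))"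

end

theory Submission
  imports Defs
begin

text \<open>Induction on the derivation of P(a,b,\<xi>) with heap h1, generalised over the second
  segment P(b,e,\<xi>) with heap h2. The base rule forces a = b and h1 = emp. An inductive rule
  of a syntactically compositional predicate passes the hole parameters \<beta> unchanged to its
  recursive P-atom and mentions them nowhere else; so rebinding \<beta> to e and adding h2 to the
  heap of the recursive atom (induction hypothesis) leaves every other conjunct of the rule
  body intact and yields a derivation of P(a,e,\<xi>) with heap h1 \<union> h2.\<close>

subsection \<open>Heaps and separating conjunction\<close>

lemma hunion_hemp [simp]: "hunion h hemp = h" "hunion hemp h = h"
  by (auto simp: hunion_def hemp_def)

lemma hdisj_hemp [simp]: "hdisj h hemp" "hdisj hemp h"
  by (auto simp: hdisj_def hemp_def)

lemma hdisj_commute: "hdisj h1 h2 \<longleftrightarrow> hdisj h2 h1"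
  by (auto simp: hdisj_def)

lemma hdisj_hunion_left [simp]: "hdisj (hunion h1 h2) h3 \<longleftrightarrow> hdisj h1 h3 \<and> hdisj h2 h3"
  by (auto simp: hdisj_def hunion_def)

lemma hdisj_hunion_right [simp]: "hdisj h3 (hunion h1 h2) \<longleftrightarrow> hdisj h3 h1 \<and> hdisj h3 h2"
  by (auto simp: hdisj_def hunion_def)

lemma hunion_assoc: "hunion (hunion h1 h2) h3 = hunion h1 (hunion h2 h3)"
  by (simp add: hunion_def map_add_assoc)

lemma hunion_commute: "hdisj h1 h2 \<Longrightarrow> hunion h1 h2 = hunion h2 h1"
  by (auto simp: hunion_def hdisj_def intro: map_add_comm)

lemma sepconj_mono:
  assumes "list_all2 (\<lambda>A B. \<forall>h. A h \<longrightarrow> B h) As Bs" and "sepconj As h"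
  shows "sepconj Bs h"
  using assms by (induction As Bs arbitrary: h rule: list_all2_induct)
    (fastforce simp del: split_paired_Ex)+

lemma sepconj_frame_replace:
  assumes "sepconj (As @ A # Bs) h" and "hdisj h h'"
    and "\<And>h0. A h0 \<Longrightarrow> hdisj h0 h' \<Longrightarrow> B (hunion h0 h')"
  shows "sepconj (As @ B # Bs) (hunion h h')"
  using assms(1,2)
proof (induction As arbitrary: h)
  case Nil
  then obtain h1 h2 where h: "hdisj h1 h2" "h = hunion h1 h2" "A h1" "sepconj Bs h2"
    by (auto simp del: split_paired_Ex)
  have "hunion h h' = hunion (hunion h1 h') h2"
    using h Nil.prems(2) by (metis hunion_assoc hunion_commute hdisj_hunion_left)
  moreover have "hdisj (hunion h1 h') h2"
    using h Nil.prems(2) by (simp add: hdisj_commute)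
  moreover have "B (hunion h1 h')"
    using h Nil.prems(2) assms(3) by simp
  ultimately show ?case
    using h by (simp only: append.simps sepconj.simps) blast
next
  case (Cons C As)
  then obtain h1 h2 where h: "hdisj h1 h2" "h = hunion h1 h2" "C h1" "sepconj (As @ A # Bs) h2"
    by (auto simp del: split_paired_Ex)
  have "sepconj (As @ B # Bs) (hunion h2 h')"
    using Cons h by simp
  moreover have "hunion h h' = hunion h1 (hunion h2 h')"
    using h by (simp add: hunion_assoc)
  moreover have "hdisj h1 (hunion h2 h')"
    using h Cons.prems(2) by simp
  ultimately show ?case
    using h by (simp only: append.simps sepconj.simps) blast
qed

subsection \<open>Satisfaction of rule bodies\<close>

definition atom_sat :: "('p \<Rightarrow> 'l list \<Rightarrow> 'd list \<Rightarrow> ('l,'f,'g,'d) heap \<Rightarrow> bool) \<Rightarrow>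
    ('x,'y,'l,'d) stack \<Rightarrow> ('x,'y,'p) patom \<Rightarrow> ('l,'f,'g,'d) heap \<Rightarrow> bool" where
  "atom_sat PS s a h = (case a of PAtom Q xs ys \<Rightarrow> PS Q (map (fst s) xs) (map (snd s) ys) h)"

lemma atom_sat_PAtom [simp]:
  "atom_sat PS s (PAtom Q xs ys) h = PS Q (map (fst s) xs) (map (snd s) ys) h"
  by (simp add: atom_sat_def)

lemma sh_sat_SH_iff:
  "sh_sat I nil PS s h (SH zl zd pu pt pr) \<longleftrightarrow>
     (\<exists>s'. (\<forall>x. x \<notin> set zl \<longrightarrow> fst s' x = fst s x) \<and>
           (\<forall>y. y \<notin> set zd \<longrightarrow> snd s' y = snd s y) \<and>
           (\<forall>p \<in> set pu. pure_sat I nil s' p) \<and>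
           sepconj (map (\<lambda>a h. pto_sat s' h a) pt @ map (atom_sat PS s') pr) h)"
  by (simp add: atom_sat_def [abs_def])

lemma lterm_val_cong:
  "\<forall>x \<in> lvars_lterm a. fst s x = fst t x \<Longrightarrow> lterm_val nil s a = lterm_val nil t a"
  by (cases a) auto

lemma pure_sat_cong:
  assumes "\<forall>x \<in> lvars_pure p. fst s x = fst t x" and "\<forall>y \<in> dvars_pure p. snd s y = snd t y"
  shows "pure_sat I nil s p = pure_sat I nil t p"
  using assms by (cases p) (auto simp: lterm_val_cong[of _ s t] cong: map_cong)

lemma pto_sat_cong:
  assumes "\<forall>x \<in> lvars_pto a. fst s x = fst t x" and "\<forall>y \<in> dvars_pto a. snd s y = snd t y"
  shows "pto_sat s h a = pto_sat t h a"
  using assms by (cases a) (auto simp: case_prod_beta)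

lemma sh_sat_mono:
  assumes "sh_sat I nil PS s h r" and "\<And>Q ls ds h. PS Q ls ds h \<Longrightarrow> PS' Q ls ds h"
  shows "sh_sat I nil PS' s h r"
proof (cases r)
  case (SH zl zd pu pt pr)
  from assms(1) obtain s' where s': "\<forall>x. x \<notin> set zl \<longrightarrow> fst s' x = fst s x"
    "\<forall>y. y \<notin> set zd \<longrightarrow> snd s' y = snd s y" "\<forall>p \<in> set pu. pure_sat I nil s' p"
    and body: "sepconj (map (\<lambda>a h. pto_sat s' h a) pt @ map (atom_sat PS s') pr) h"
    unfolding SH sh_sat_SH_iff by blast
  have "sepconj (map (\<lambda>a h. pto_sat s' h a) pt @ map (atom_sat PS' s') pr) h"
  proof (rule sepconj_mono[OF _ body])
    show "list_all2 (\<lambda>A B. \<forall>h. A h \<longrightarrow> B h)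
        (map (\<lambda>a h. pto_sat s' h a) pt @ map (atom_sat PS s') pr)
        (map (\<lambda>a h. pto_sat s' h a) pt @ map (atom_sat PS' s') pr)"
      using assms(2) by (auto intro!: list_all2_appendI
          simp: list_all2_map1 list_all2_map2 list_all2_same atom_sat_def split: patom.split)
  qed
  with s' show ?thesis
    unfolding SH sh_sat_SH_iff by blast
qed

definition stack_upd :: "('x,'y,'l,'d) stack \<Rightarrow> 'x \<Rightarrow> 'l \<Rightarrow> 'y \<Rightarrow> 'd \<Rightarrow> ('x,'y,'l,'d) stack" where
  "stack_upd s x v y w = ((fst s)(x := v), (snd s)(y := w))"

lemma sh_sat_rebind_hole:
  assumes sat: "sh_sat I nil PS s h (SH zl zd pu pt (pr1 @ A # pr2))"
    and bound: "x \<notin> set zl" "y \<notin> set zd"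
    and x_fresh: "x \<notin> (\<Union>p \<in> set pu. lvars_pure p) \<union> (\<Union>a \<in> set pt. lvars_pto a) \<union>
                      (\<Union>a \<in> set (pr1 @ pr2). lvars_patom a)"
    and y_fresh: "y \<notin> (\<Union>p \<in> set pu. dvars_pure p) \<union> (\<Union>a \<in> set pt. dvars_pto a) \<union>
                      (\<Union>a \<in> set (pr1 @ pr2). dvars_patom a)"
    and PS_PS': "\<And>Q ls ds h0. PS Q ls ds h0 \<Longrightarrow> PS' Q ls ds h0"
    and disj: "hdisj h h'"
    and hole: "\<And>s' h0. \<forall>z. z \<notin> set zl \<longrightarrow> fst s' z = fst s z \<Longrightarrow> \<forall>z. z \<notin> set zd \<longrightarrow> snd s' z = snd s z \<Longrightarrow>
                 atom_sat PS s' A h0 \<Longrightarrow> hdisj h0 h' \<Longrightarrow>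
                 atom_sat PS' (stack_upd s' x v y w) A (hunion h0 h')"
  shows "sh_sat I nil PS' (stack_upd s x v y w) (hunion h h') (SH zl zd pu pt (pr1 @ A # pr2))"
proof -
  from sat obtain s' where s': "\<forall>z. z \<notin> set zl \<longrightarrow> fst s' z = fst s z"
    "\<forall>z. z \<notin> set zd \<longrightarrow> snd s' z = snd s z" "\<forall>p \<in> set pu. pure_sat I nil s' p"
    and body: "sepconj ((map (\<lambda>a h. pto_sat s' h a) pt @ map (atom_sat PS s') pr1) @
                        atom_sat PS s' A # map (atom_sat PS s') pr2) h"
    unfolding sh_sat_SH_iff by auto
  define s'' where "s'' = stack_upd s' x v y w"
  have agree: "\<forall>z. z \<notin> set zl \<longrightarrow> fst s'' z = fst (stack_upd s x v y w) z"
    "\<forall>z. z \<notin> set zd \<longrightarrow> snd s'' z = snd (stack_upd s x v y w) z"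
    using s'(1,2) by (simp_all add: s''_def stack_upd_def)
  have pure: "\<forall>p \<in> set pu. pure_sat I nil s'' p"
  proof
    fix p assume "p \<in> set pu"
    then have "pure_sat I nil s'' p = pure_sat I nil s' p"
      using x_fresh y_fresh by (intro pure_sat_cong) (auto simp: s''_def stack_upd_def)
    with s'(3) \<open>p \<in> set pu\<close> show "pure_sat I nil s'' p" by simp
  qed
  have "list_all2 (\<lambda>A B. \<forall>h. A h \<longrightarrow> B h)
      ((map (\<lambda>a h. pto_sat s' h a) pt @ map (atom_sat PS s') pr1) @ atom_sat PS s' A # map (atom_sat PS s') pr2)
      ((map (\<lambda>a h. pto_sat s'' h a) pt @ map (atom_sat PS' s'') pr1) @ atom_sat PS s' A # map (atom_sat PS' s'') pr2)"
  proof -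
    have pto: "pto_sat s' h0 a \<longrightarrow> pto_sat s'' h0 a" if "a \<in> set pt" for a h0
      using that x_fresh y_fresh pto_sat_cong[of a s'' s'] by (auto simp: s''_def stack_upd_def)
    have atom: "atom_sat PS s' a h0 \<longrightarrow> atom_sat PS' s'' a h0" if "a \<in> set (pr1 @ pr2)" for a h0
    proof (cases a)
      case (PAtom Q xs ys)
      with that x_fresh y_fresh have "x \<notin> set xs" "y \<notin> set ys"
        by auto
      with PAtom PS_PS' show ?thesis
        by (simp add: s''_def stack_upd_def)
    qed
    show ?thesis
      using pto atom by (auto intro!: list_all2_appendI simp: list_all2_map1 list_all2_map2 list_all2_same)
  qed
  then have "sepconj ((map (\<lambda>a h. pto_sat s'' h a) pt @ map (atom_sat PS' s'') pr1) @
                        atom_sat PS s' A # map (atom_sat PS' s'') pr2) h"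
    using body by (rule sepconj_mono)
  then have "sepconj ((map (\<lambda>a h. pto_sat s'' h a) pt @ map (atom_sat PS' s'') pr1) @
                        atom_sat PS' s'' A # map (atom_sat PS' s'') pr2) (hunion h h')"
    using disj by (rule sepconj_frame_replace) (use hole s'(1,2) in \<open>simp add: s''_def\<close>)
  then show ?thesis
    unfolding sh_sat_SH_iff using agree pure by (intro exI[of _ s'']) simp
qed

subsection \<open>Least-fixed-point semantics of the predicates\<close>

definition pred_step :: "('r \<Rightarrow> 'd list \<Rightarrow> bool) \<Rightarrow> 'l \<Rightarrow> ('x,'y,'r,'f,'g,'p) sys \<Rightarrow>
    ('p \<times> 'l list \<times> 'd list \<times> ('l,'f,'g,'d) heap) set \<Rightarrow>
    ('p \<times> 'l list \<times> 'd list \<times> ('l,'f,'g,'d) heap) set" where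
  "pred_step I nil S X = {(Q, ls, ds, h). \<exists>r \<in> set (rules S Q). \<exists>s.
       map (fst s) (lparams S Q) = ls \<and> map (snd s) (dparams S Q) = ds \<and>
       sh_sat I nil (\<lambda>Q' ls' ds' h'. (Q', ls', ds', h') \<in> X) s h r}"

lemma pred_sem_eq_lfp: "pred_sem I nil S = lfp (pred_step I nil S)"
  unfolding pred_sem_def pred_step_def ..

lemma mono_pred_step: "mono (pred_step I nil S)"
  unfolding pred_step_def by (rule monoI) (blast intro: sh_sat_mono)

lemma pred_semI:
  assumes "r \<in> set (rules S Q)" and "map (fst s) (lparams S Q) = ls" and "map (snd s) (dparams S Q) = ds"
    and "sh_sat I nil (\<lambda>Q' ls' ds' h'. (Q', ls', ds', h') \<in> pred_sem I nil S) s h r"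
  shows "(Q, ls, ds, h) \<in> pred_sem I nil S"
proof -
  have "(Q, ls, ds, h) \<in> pred_step I nil S (pred_sem I nil S)"
    using assms unfolding pred_step_def by blast
  then show ?thesis
    unfolding pred_sem_eq_lfp by (subst lfp_unfold[OF mono_pred_step])
qed

lemma pred_sem_induct [consumes 1, case_names rule]:
  assumes "(Q, ls, ds, h) \<in> pred_sem I nil S"
    and "\<And>Q ls ds h r s. r \<in> set (rules S Q) \<Longrightarrow>
           map (fst s) (lparams S Q) = ls \<Longrightarrow> map (snd s) (dparams S Q) = ds \<Longrightarrow>
           sh_sat I nil (\<lambda>Q' ls' ds' h'. (Q', ls', ds', h') \<in> pred_sem I nil S \<and> R Q' ls' ds' h') s h r \<Longrightarrow>
           R Q ls ds h"
  shows "R Q ls ds h"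
proof -
  have "lfp (pred_step I nil S) \<subseteq> {(Q, ls, ds, h). R Q ls ds h}"
  proof (rule lfp_induct[OF mono_pred_step], rule subsetI)
    fix x assume "x \<in> pred_step I nil S (lfp (pred_step I nil S) \<inter> {(Q, ls, ds, h). R Q ls ds h})"
    then show "x \<in> {(Q, ls, ds, h). R Q ls ds h}"
      unfolding pred_sem_eq_lfp[symmetric] pred_step_def
      by (auto intro: assms(2) simp del: split_paired_Ex split_paired_All)
  qed
  then show ?thesis
    using assms(1) unfolding pred_sem_eq_lfp by blast
qed

definition composable :: "('r \<Rightarrow> 'd list \<Rightarrow> bool) \<Rightarrow> 'l \<Rightarrow> ('x,'y,'r,'f,'g,'p) sys \<Rightarrow> 'p \<Rightarrow>
    'l list \<Rightarrow> 'd list \<Rightarrow> ('l,'f,'g,'d) heap \<Rightarrow> bool" where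
  "composable I nil S P ls ds h1 \<longleftrightarrow>
     (\<forall>a b xs c d ys e f h2. ls = a # b # xs \<longrightarrow> ds = c # d # ys \<longrightarrow> hdisj h1 h2 \<longrightarrow>
        (P, b # e # xs, d # f # ys, h2) \<in> pred_sem I nil S \<longrightarrow>
        (P, a # e # xs, c # f # ys, hunion h1 h2) \<in> pred_sem I nil S)"

lemma sem_compositionalI:
  fixes S :: "('x,'y,'r,'f,'g,'p) sys" and I :: "'r \<Rightarrow> 'd list \<Rightarrow> bool" and nil :: 'l
  assumes lparams: "lparams S P = \<alpha>1 # \<beta>1 # \<xi>l" and dparams: "dparams S P = \<alpha>2 # \<beta>2 # \<xi>d"
    and distinct: "distinct (lparams S P)" "distinct (dparams S P)"
    and composable: "\<And>ls ds h. (P, ls, ds, h) \<in> pred_sem I nil S \<Longrightarrow> composable I nil S P ls ds h"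
  shows "sem_compositional I nil S P"
  unfolding sem_compositional_def
proof (intro exI conjI allI impI)
  fix \<gamma>1 \<gamma>2 assume \<gamma>: "\<gamma>1 \<noteq> \<beta>1 \<and> \<gamma>2 \<noteq> \<beta>2"
  show "entails I nil S
      (SH [\<beta>1] [\<beta>2] [] [] [PAtom P (\<alpha>1 # \<beta>1 # \<xi>l) (\<alpha>2 # \<beta>2 # \<xi>d), PAtom P (\<beta>1 # \<gamma>1 # \<xi>l) (\<beta>2 # \<gamma>2 # \<xi>d)])
      (SH [] [] [] [] [PAtom P (\<alpha>1 # \<gamma>1 # \<xi>l) (\<alpha>2 # \<gamma>2 # \<xi>d)])"
    unfolding entails_def
  proof (intro allI impI)
    fix s :: "('x,'y,'l,'d) stack" and h :: "('l,'f,'g,'d) heap"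
    assume "sat I nil S s h
      (SH [\<beta>1] [\<beta>2] [] [] [PAtom P (\<alpha>1 # \<beta>1 # \<xi>l) (\<alpha>2 # \<beta>2 # \<xi>d), PAtom P (\<beta>1 # \<gamma>1 # \<xi>l) (\<beta>2 # \<gamma>2 # \<xi>d)])"
    then obtain s' h1 h2 where s': "\<forall>x. x \<noteq> \<beta>1 \<longrightarrow> fst s' x = fst s x" "\<forall>y. y \<noteq> \<beta>2 \<longrightarrow> snd s' y = snd s y"
      and h: "hdisj h1 h2" "h = hunion h1 h2"
      and seg1: "(P, map (fst s') (\<alpha>1 # \<beta>1 # \<xi>l), map (snd s') (\<alpha>2 # \<beta>2 # \<xi>d), h1) \<in> pred_sem I nil S"
      and seg2: "(P, map (fst s') (\<beta>1 # \<gamma>1 # \<xi>l), map (snd s') (\<beta>2 # \<gamma>2 # \<xi>d), h2) \<in> pred_sem I nil S"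
      unfolding sat_def sh_sat_SH_iff by (auto simp del: split_paired_Ex)
    have "(P, map (fst s') (\<alpha>1 # \<gamma>1 # \<xi>l), map (snd s') (\<alpha>2 # \<gamma>2 # \<xi>d), h) \<in> pred_sem I nil S"
      using composable[OF seg1] seg2 h unfolding composable_def by (simp del: split_paired_All)
    moreover have "map (fst s') (\<alpha>1 # \<gamma>1 # \<xi>l) = map (fst s) (\<alpha>1 # \<gamma>1 # \<xi>l)"
      "map (snd s') (\<alpha>2 # \<gamma>2 # \<xi>d) = map (snd s) (\<alpha>2 # \<gamma>2 # \<xi>d)"
      using s' \<gamma> distinct lparams dparams by (auto simp del: list.map)
    ultimately have "(P, map (fst s) (\<alpha>1 # \<gamma>1 # \<xi>l), map (snd s) (\<alpha>2 # \<gamma>2 # \<xi>d), h) \<in> pred_sem I nil S"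
      by (simp only:)
    then show "sat I nil S s h (SH [] [] [] [] [PAtom P (\<alpha>1 # \<gamma>1 # \<xi>l) (\<alpha>2 # \<gamma>2 # \<xi>d)])"
      unfolding sat_def sh_sat_SH_iff by (intro exI[of _ s]) (simp del: split_paired_Ex)
  qed
qed (use lparams dparams in auto)

locale syn_compositional_pred =
  fixes S :: "('x,'y,'r,'f,'g,'p) sys" and Ps :: "'p set" and P :: 'p
    and \<alpha>1 \<beta>1 :: 'x and \<xi>l :: "'x list" and \<alpha>2 \<beta>2 :: 'y and \<xi>d :: "'y list"
  assumes wf: "wf_sys S Ps" and P_in: "P \<in> Ps" and syn: "syn_compositional S P"
    and lparams_P: "lparams S P = \<alpha>1 # \<beta>1 # \<xi>l" and dparams_P: "dparams S P = \<alpha>2 # \<beta>2 # \<xi>d"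
begin

lemma distinct_params: "distinct (lparams S P)" "distinct (dparams S P)"
  using wf P_in unfolding wf_sys_def by auto

lemma sh_sat_base_rule:
  assumes "r \<in> set (rules S P)" and "is_base r" and "sh_sat I nil PS s h r"
  shows "h = hemp \<and> fst s \<alpha>1 = fst s \<beta>1 \<and> snd s \<alpha>2 = snd s \<beta>2"
proof -
  obtain pu where base: "filter is_base (rules S P) = [SH [] [] pu [] []]"
    and pu: "set pu = {LEq (LV \<alpha>1) (LV \<beta>1), DEq \<alpha>2 \<beta>2}"
    using syn unfolding syn_compositional_def lparams_P dparams_P list.inject
    by (elim exE conjE) (hypsubst, blast)
  have "r \<in> set (filter is_base (rules S P))"
    using assms(1,2) by simp
  then have "r = SH [] [] pu [] []"
    using base by simp
  with assms(3) obtain s' where "\<forall>x. fst s' x = fst s x" "\<forall>y. snd s' y = snd s y"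
    "\<forall>p \<in> set pu. pure_sat I nil s' p" "h = hemp"
    unfolding sh_sat_SH_iff by auto
  then show ?thesis
    using pu by auto
qed

lemma inductive_ruleE:
  assumes "r \<in> set (rules S P)" and "\<not> is_base r"
  obtains zl zd pu pt pr1 pr2 \<gamma>1 \<gamma>2
  where "r = SH zl zd pu pt (pr1 @ PAtom P (\<gamma>1 # \<beta>1 # \<xi>l) (\<gamma>2 # \<beta>2 # \<xi>d) # pr2)"
    and "\<gamma>1 \<noteq> \<beta>1" and "\<gamma>2 \<noteq> \<beta>2"
    and "set zl \<inter> set (lparams S P) = {}" and "set zd \<inter> set (dparams S P) = {}"
    and "\<beta>1 \<notin> (\<Union>p \<in> set pu. lvars_pure p) \<union> (\<Union>a \<in> set pt. lvars_pto a) \<union>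
                 (\<Union>a \<in> set (pr1 @ pr2). lvars_patom a)"
    and "\<beta>2 \<notin> (\<Union>p \<in> set pu. dvars_pure p) \<union> (\<Union>a \<in> set pt. dvars_pto a) \<union>
                 (\<Union>a \<in> set (pr1 @ pr2). dvars_patom a)"
proof -
  obtain zl zd pu pt pr \<Sigma>2 \<gamma>1 \<gamma>2 where r: "r = SH zl zd pu pt pr"
    and pr: "mset pr = mset (PAtom P (\<gamma>1 # \<beta>1 # \<xi>l) (\<gamma>2 # \<beta>2 # \<xi>d) # \<Sigma>2)"
    and \<gamma>: "\<gamma>1 \<noteq> \<beta>1" "\<gamma>2 \<noteq> \<beta>2"
    and \<beta>1: "\<beta>1 \<notin> (\<Union>p \<in> set pu. lvars_pure p) \<union> (\<Union>a \<in> set pt. lvars_pto a) \<union> (\<Union>a \<in> set \<Sigma>2. lvars_patom a)"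
    and \<beta>2: "\<beta>2 \<notin> (\<Union>p \<in> set pu. dvars_pure p) \<union> (\<Union>a \<in> set pt. dvars_pto a) \<union> (\<Union>a \<in> set \<Sigma>2. dvars_patom a)"
    using syn assms unfolding syn_compositional_def lparams_P dparams_P list.inject
    by (elim exE conjE) (hypsubst, drule (1) bspec, drule (1) mp, elim exE conjE, rule that, assumption+)
  obtain pr1 pr2 where pr_split: "pr = pr1 @ PAtom P (\<gamma>1 # \<beta>1 # \<xi>l) (\<gamma>2 # \<beta>2 # \<xi>d) # pr2"
    using pr by (metis list.set_intros(1) set_mset_mset split_list)
  have "mset (pr1 @ pr2) = mset \<Sigma>2"
    using pr unfolding pr_split by simp
  then have \<Sigma>2: "set (pr1 @ pr2) = set \<Sigma>2"
    by (metis set_mset_mset)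
  have "wf_rule S Ps P r"
    using wf P_in assms(1) unfolding wf_sys_def by blast
  then have "set zl \<inter> set (lparams S P) = {}" "set zd \<inter> set (dparams S P) = {}"
    unfolding r by simp_all
  from that[OF r[unfolded pr_split] \<gamma> this] show ?thesis
    using \<beta>1 \<beta>2 unfolding \<Sigma>2 by blast
qed

lemma inductive_rule_composable:
  assumes rule: "r \<in> set (rules S P)" "\<not> is_base r"
    and stack: "map (fst s) (lparams S P) = a # b # xs" "map (snd s) (dparams S P) = c # d # ys"
    and body: "sh_sat I nil (\<lambda>Q ls ds h. (Q, ls, ds, h) \<in> pred_sem I nil S \<and>
                                         (Q = P \<longrightarrow> composable I nil S P ls ds h)) s h1 r"
    and disj: "hdisj h1 h2" and seg2: "(P, b # e # xs, d # f # ys, h2) \<in> pred_sem I nil S"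
  shows "(P, a # e # xs, c # f # ys, hunion h1 h2) \<in> pred_sem I nil S"
proof -
  obtain zl zd pu pt pr1 pr2 \<gamma>1 \<gamma>2
    where r: "r = SH zl zd pu pt (pr1 @ PAtom P (\<gamma>1 # \<beta>1 # \<xi>l) (\<gamma>2 # \<beta>2 # \<xi>d) # pr2)"
    and \<gamma>: "\<gamma>1 \<noteq> \<beta>1" "\<gamma>2 \<noteq> \<beta>2"
    and zl: "set zl \<inter> set (lparams S P) = {}" and zd: "set zd \<inter> set (dparams S P) = {}"
    and fresh: "\<beta>1 \<notin> (\<Union>p \<in> set pu. lvars_pure p) \<union> (\<Union>a \<in> set pt. lvars_pto a) \<union>
                       (\<Union>a \<in> set (pr1 @ pr2). lvars_patom a)"
      "\<beta>2 \<notin> (\<Union>p \<in> set pu. dvars_pure p) \<union> (\<Union>a \<in> set pt. dvars_pto a) \<union>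
                       (\<Union>a \<in> set (pr1 @ pr2). dvars_patom a)"
    using inductive_ruleE[OF rule] .
  have distinct: "\<alpha>1 \<noteq> \<beta>1" "\<beta>1 \<notin> set \<xi>l" "\<alpha>2 \<noteq> \<beta>2" "\<beta>2 \<notin> set \<xi>d"
    using distinct_params lparams_P dparams_P by auto
  have sat: "sh_sat I nil (\<lambda>Q ls ds h. (Q, ls, ds, h) \<in> pred_sem I nil S)
          (stack_upd s \<beta>1 e \<beta>2 f) (hunion h1 h2) r"
    unfolding r
  proof (rule sh_sat_rebind_hole[OF body[unfolded r] _ _ fresh _ disj])
    show "\<beta>1 \<notin> set zl" "\<beta>2 \<notin> set zd"
      using zl zd lparams_P dparams_P by auto
  next
    fix s' h0
    assume "\<forall>z. z \<notin> set zl \<longrightarrow> fst s' z = fst s z" "\<forall>z. z \<notin> set zd \<longrightarrow> snd s' z = snd s z"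
    then have "map (fst s') (lparams S P) = map (fst s) (lparams S P)"
      "map (snd s') (dparams S P) = map (snd s) (dparams S P)"
      using zl zd by (intro map_cong; blast)+
    then have "map (fst s') (lparams S P) = a # b # xs" "map (snd s') (dparams S P) = c # d # ys"
      using stack by simp_all
    then have params: "fst s' \<beta>1 = b" "map (fst s') \<xi>l = xs" "snd s' \<beta>2 = d" "map (snd s') \<xi>d = ys"
      using lparams_P dparams_P by auto
    assume "atom_sat (\<lambda>Q ls ds h. (Q, ls, ds, h) \<in> pred_sem I nil S \<and> (Q = P \<longrightarrow> composable I nil S P ls ds h))
              s' (PAtom P (\<gamma>1 # \<beta>1 # \<xi>l) (\<gamma>2 # \<beta>2 # \<xi>d)) h0" and "hdisj h0 h2"
    then have "(P, fst s' \<gamma>1 # e # xs, snd s' \<gamma>2 # f # ys, hunion h0 h2) \<in> pred_sem I nil S"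
      using seg2 params unfolding composable_def by (simp del: split_paired_All)
    then show "atom_sat (\<lambda>Q ls ds h. (Q, ls, ds, h) \<in> pred_sem I nil S) (stack_upd s' \<beta>1 e \<beta>2 f)
              (PAtom P (\<gamma>1 # \<beta>1 # \<xi>l) (\<gamma>2 # \<beta>2 # \<xi>d)) (hunion h0 h2)"
      using \<gamma> distinct params by (simp add: stack_upd_def)
  qed simp
  have params: "map (fst (stack_upd s \<beta>1 e \<beta>2 f)) (lparams S P) = a # e # xs"
    "map (snd (stack_upd s \<beta>1 e \<beta>2 f)) (dparams S P) = c # f # ys"
    using stack distinct lparams_P dparams_P by (auto simp: stack_upd_def)
  show ?thesis
    using pred_semI[OF rule(1) params sat] .
qed

lemma pred_sem_composable:
  assumes "(P, ls, ds, h) \<in> pred_sem I nil S"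
  shows "composable I nil S P ls ds h"
proof -
  have "Q = P \<longrightarrow> composable I nil S P ls ds h" if "(Q, ls, ds, h) \<in> pred_sem I nil S" for Q ls ds h
    using that
  proof (induction rule: pred_sem_induct)
    case (rule Q ls ds h1 r s)
    show ?case
      unfolding composable_def
    proof (intro impI allI)
      fix a b xs c d ys e f h2
      assume "Q = P" and params: "ls = a # b # xs" "ds = c # d # ys"
        and disj: "hdisj h1 h2" and seg2: "(P, b # e # xs, d # f # ys, h2) \<in> pred_sem I nil S"
      show "(P, a # e # xs, c # f # ys, hunion h1 h2) \<in> pred_sem I nil S"
      proof (cases "is_base r")
        case True
        have "h1 = hemp \<and> fst s \<alpha>1 = fst s \<beta>1 \<and> snd s \<alpha>2 = snd s \<beta>2"
          using sh_sat_base_rule[OF _ True rule.IH] rule.hyps(1) \<open>Q = P\<close> by simp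
        then have "h1 = hemp" "a = b" "c = d"
          using rule.hyps(2,3) \<open>Q = P\<close> params lparams_P dparams_P by auto
        with seg2 show ?thesis
          by simp
      next
        case False
        have "r \<in> set (rules S P)" "map (fst s) (lparams S P) = a # b # xs"
          "map (snd s) (dparams S P) = c # d # ys"
          using rule.hyps \<open>Q = P\<close> params by simp_all
        from inductive_rule_composable[OF this(1) False this(2,3) _ disj seg2] rule.IH \<open>Q = P\<close>
        show ?thesis
          by simp
      qed
    qed
  qed
  with assms show ?thesis
    by blast
qed

end

theorem theorem1:
  fixes S :: "('x,'y,'r,'f,'g,'p) sys"
    and I :: "'r \<Rightarrow> 'd list \<Rightarrow> bool"
    and nil :: 'l
    and Ps :: "'p set"
  assumes "wf_sys S Ps"
    and "P \<in> Ps"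
    and "syn_compositional S P"
  shows "sem_compositional I nil S P"
proof -
  obtain \<alpha>1 \<beta>1 \<xi>l \<alpha>2 \<beta>2 \<xi>d
    where lparams: "lparams S P = \<alpha>1 # \<beta>1 # \<xi>l" and dparams: "dparams S P = \<alpha>2 # \<beta>2 # \<xi>d"
    using assms(3) unfolding syn_compositional_def by (elim exE conjE) (rule that)
  interpret syn_compositional_pred S Ps P \<alpha>1 \<beta>1 \<xi>l \<alpha>2 \<beta>2 \<xi>d
    using assms lparams dparams by unfold_locales
  show ?thesis
    using lparams dparams distinct_params pred_sem_composable by (rule sem_compositionalI)
qed

end
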